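(* Let $I$ be an open interval with $a=\inf I$, $S$ a nonempty set, $F:I\to S$, $\varphi\in\mathrm{Homeo}^+(I)$, and $t\in I$, and suppose $F$ is $\varphi$-invariant before $t$, i.e., $F(x)=F(\varphi(x))$ for all $x\in(a,t)$. Then there is a function $H:I\to S$ that extends $F|_{(a,t)}$ and is $\varphi$-invariant, i.e., $H=H\circ\varphi$.
   Context: $\mathrm{Homeo}^+(I)$ is the group of increasing homeomorphisms of $I$. *)

theory Defs
  imports "HOL-Analysis.Analysis"
begin

definition open_interval :: "real set \<Rightarrow> bool" where
  "open_interval I \<longleftrightarrow> I \<noteq> {} \<and> open I \<and> is_interval I"

definition homeo_plus :: "real set \<Rightarrow> (real \<Rightarrow> real) \<Rightarrow> bool" where
  "homeo_plus I \<phi> \<longleftrightarrow> (\<exists>\<psi>. homeomorphism I I \<phi> \<psi>) \<and> strict_mono_on I \<phi>"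

end

theory Submission
  imports Defs
begin

text \<open>Call two points equivalent when their forward \<open>\<phi>\<close>-orbits meet. A \<open>\<phi>\<close>-invariant function
  must be constant on equivalence classes, and conversely any choice of a value per class gives
  one. So \<open>H\<close> takes on each class the value of \<open>F\<close> at some point of the class below \<open>t\<close> (and an
  arbitrary value of \<open>S\<close> on classes without such points). This is well defined: if \<open>y, z < t\<close> are
  equivalent then, \<open>\<phi>\<close> being injective, \<open>y = \<phi>\<^sup>k z\<close> for some \<open>k\<close> (or vice versa); since \<open>\<phi>\<close> is
  increasing the orbit \<open>z, \<phi> z, \<dots>, \<phi>\<^sup>k z\<close> is monotone, so it stays below \<open>t\<close>, and the
  invariance of \<open>F\<close> before \<open>t\<close> gives \<open>F y = F z\<close>.\<close>

definition same_forward_orbit :: "('a \<Rightarrow> 'a) \<Rightarrow> 'a \<Rightarrow> 'a \<Rightarrow> bool" where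
  "same_forward_orbit \<phi> x y \<longleftrightarrow> (\<exists>m n. (\<phi> ^^ m) x = (\<phi> ^^ n) y)"

lemma same_forward_orbit_refl: "same_forward_orbit \<phi> x x"
  unfolding same_forward_orbit_def by blast

lemma same_forward_orbit_apply_left:
  "same_forward_orbit \<phi> (\<phi> x) y \<longleftrightarrow> same_forward_orbit \<phi> x y"
proof
  assume "same_forward_orbit \<phi> (\<phi> x) y"
  then obtain m n where "(\<phi> ^^ m) (\<phi> x) = (\<phi> ^^ n) y"
    unfolding same_forward_orbit_def by blast
  then have "(\<phi> ^^ Suc m) x = (\<phi> ^^ n) y"
    by (simp add: funpow_swap1)
  then show "same_forward_orbit \<phi> x y"
    unfolding same_forward_orbit_def by blast
next
  assume "same_forward_orbit \<phi> x y"
  then obtain m n where "(\<phi> ^^ m) x = (\<phi> ^^ n) y"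
    unfolding same_forward_orbit_def by blast
  then have "(\<phi> ^^ m) (\<phi> x) = (\<phi> ^^ Suc n) y"
    by (simp add: funpow_swap1[symmetric])
  then show "same_forward_orbit \<phi> (\<phi> x) y"
    unfolding same_forward_orbit_def by blast
qed

context
  fixes \<phi> :: "'a \<Rightarrow> 'a" and I D :: "'a set" and F :: "'a \<Rightarrow> 'b"
  assumes bij: "bij_betw \<phi> I I"
    and D_subset: "D \<subseteq> I"
    and F_invariant: "\<And>x. x \<in> D \<Longrightarrow> F (\<phi> x) = F x"
    and orbit_convex: "\<And>y k j. y \<in> D \<Longrightarrow> (\<phi> ^^ k) y \<in> D \<Longrightarrow> j \<le> k \<Longrightarrow> (\<phi> ^^ j) y \<in> D"
begin

lemma F_funpow_eq:
  assumes "y \<in> D" "(\<phi> ^^ k) y \<in> D"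
  shows "F ((\<phi> ^^ k) y) = F y"
proof -
  have "F ((\<phi> ^^ j) y) = F y" if "j \<le> k" for j
    using that
  proof (induction j)
    case (Suc j)
    then have "(\<phi> ^^ j) y \<in> D"
      using orbit_convex assms by simp
    then show ?case
      using Suc F_invariant by simp
  qed simp
  then show ?thesis by simp
qed

lemma F_eq_if_same_forward_orbit:
  assumes "y \<in> D" "z \<in> D" "same_forward_orbit \<phi> y z"
  shows "F y = F z"
proof -
  have eq: "F y = F z" if "y \<in> D" "z \<in> D" "(\<phi> ^^ m) y = (\<phi> ^^ (m + k)) z" for y z m k
  proof -
    have "inj_on (\<phi> ^^ m) I" "(\<phi> ^^ k) z \<in> I"
      using bij_betw_funpow[OF bij] that(2) D_subset by (auto simp: bij_betw_def)
    moreover have "(\<phi> ^^ m) y = (\<phi> ^^ m) ((\<phi> ^^ k) z)"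
      using that(3) by (simp add: funpow_add)
    ultimately have "y = (\<phi> ^^ k) z"
      using that(1) D_subset by (auto dest: inj_onD)
    then show ?thesis
      using F_funpow_eq that(1,2) by simp
  qed
  obtain m n where mn: "(\<phi> ^^ m) y = (\<phi> ^^ n) z"
    using assms(3) unfolding same_forward_orbit_def by blast
  show ?thesis
  proof (cases "m \<le> n")
    case True
    then show ?thesis
      using eq[of y z m "n - m"] mn assms(1,2) by simp
  next
    case False
    then show ?thesis
      using eq[of z y n "m - n"] mn assms(1,2) by simp
  qed
qed

lemma invariant_extension_exists:
  assumes "F ` D \<subseteq> S" "s \<in> S"
  shows "\<exists>H. range H \<subseteq> S \<and> (\<forall>x\<in>D. H x = F x) \<and> (\<forall>x. H (\<phi> x) = H x)"
proof -
  define rep where "rep x = (SOME y. y \<in> D \<and> same_forward_orbit \<phi> x y)" for x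
  have rep: "rep x \<in> D \<and> same_forward_orbit \<phi> x (rep x)" if "\<exists>y\<in>D. same_forward_orbit \<phi> x y" for x
    using someI_ex[of "\<lambda>y. y \<in> D \<and> same_forward_orbit \<phi> x y"] that unfolding rep_def by blast
  define H where "H x = (if \<exists>y\<in>D. same_forward_orbit \<phi> x y then F (rep x) else s)" for x
  have "range H \<subseteq> S"
    using rep assms unfolding H_def by auto
  moreover have "H x = F x" if "x \<in> D" for x
  proof -
    have "\<exists>y\<in>D. same_forward_orbit \<phi> x y"
      using that same_forward_orbit_refl[of \<phi> x] by blast
    then have "H x = F (rep x)" "rep x \<in> D" "same_forward_orbit \<phi> x (rep x)"
      using rep unfolding H_def by auto
    then show ?thesis
      using F_eq_if_same_forward_orbit[OF that] by simp
  qed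
  moreover have "H (\<phi> x) = H x" for x
    by (simp only: H_def rep_def same_forward_orbit_apply_left)
  ultimately show ?thesis by blast
qed

end

lemma funpow_in:
  assumes "\<phi> ` I \<subseteq> I" "x \<in> I"
  shows "(\<phi> ^^ n) x \<in> I"
  using assms by (induction n) auto

lemma funpow_mono_on:
  fixes \<phi> :: "'a::order \<Rightarrow> 'a"
  assumes "mono_on I \<phi>" "\<phi> ` I \<subseteq> I" "x \<in> I" "y \<in> I" "x \<le> y"
  shows "(\<phi> ^^ n) x \<le> (\<phi> ^^ n) y"
proof (induction n)
  case (Suc n)
  show ?case
    using mono_onD[OF assms(1) funpow_in[OF assms(2,3)] funpow_in[OF assms(2,4)] Suc.IH] by simp
qed (use assms in simp)

lemma funpow_less_between:
  fixes \<phi> :: "'a::linorder \<Rightarrow> 'a"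
  assumes "mono_on I \<phi>" "\<phi> ` I \<subseteq> I" "y \<in> I"
    and "y < t" "(\<phi> ^^ k) y < t" "j \<le> k"
  shows "(\<phi> ^^ j) y < t"
proof -
  have "\<phi> y \<in> I"
    using assms(2,3) by blast
  show ?thesis
  proof (cases "y \<le> \<phi> y")
    case True
    have "incseq (\<lambda>n. (\<phi> ^^ n) y)"
    proof (rule incseq_SucI)
      show "(\<phi> ^^ n) y \<le> (\<phi> ^^ Suc n) y" for n
        using funpow_mono_on[OF assms(1-3) \<open>\<phi> y \<in> I\<close> True] by (simp add: funpow_swap1)
    qed
    then have "(\<phi> ^^ j) y \<le> (\<phi> ^^ k) y"
      using assms(6) by (rule incseqD)
    then show ?thesis
      using assms(5) by simp
  next
    case False
    then have "\<phi> y \<le> y"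
      by simp
    have "decseq (\<lambda>n. (\<phi> ^^ n) y)"
    proof (rule decseq_SucI)
      show "(\<phi> ^^ Suc n) y \<le> (\<phi> ^^ n) y" for n
        using funpow_mono_on[OF assms(1,2) \<open>\<phi> y \<in> I\<close> assms(3) \<open>\<phi> y \<le> y\<close>]
        by (simp add: funpow_swap1)
    qed
    then have "(\<phi> ^^ j) y \<le> (\<phi> ^^ 0) y"
      by (rule decseqD) simp
    then show ?thesis
      using assms(4) by simp
  qed
qed

theorem lemma3p1:
  fixes I :: "real set" and S :: "'b set" and F :: "real \<Rightarrow> 'b"
    and \<phi> :: "real \<Rightarrow> real" and t :: real
  assumes "open_interval I"
    and "S \<noteq> {}"
    and "F ` I \<subseteq> S"
    and "homeo_plus I \<phi>"
    and "t \<in> I"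
    and "\<forall>x\<in>I. x < t \<longrightarrow> F x = F (\<phi> x)"
  shows "\<exists>H. H ` I \<subseteq> S \<and> (\<forall>x\<in>I. x < t \<longrightarrow> H x = F x) \<and> (\<forall>x\<in>I. H x = H (\<phi> x))"
proof -
  obtain \<psi> where hom: "homeomorphism I I \<phi> \<psi>" and incr: "strict_mono_on I \<phi>"
    using assms(4) unfolding homeo_plus_def by blast
  have "\<phi> ` I = I"
    using hom by (rule homeomorphism_image1)
  then have bij: "bij_betw \<phi> I I"
    using incr strict_mono_on_imp_inj_on by (auto simp: bij_betw_def)
  obtain s where "s \<in> S"
    using assms(2) by blast
  let ?D = "{x \<in> I. x < t}"
  have D_subset: "?D \<subseteq> I"
    by blast
  have F_invariant: "F (\<phi> x) = F x" if "x \<in> ?D" for x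
    using assms(6) that by simp
  have orbit_convex: "(\<phi> ^^ j) y \<in> ?D" if "y \<in> ?D" "(\<phi> ^^ k) y \<in> ?D" "j \<le> k" for y k j
    using that funpow_less_between[OF strict_mono_on_imp_mono_on[OF incr], of y t k j]
      funpow_in[of \<phi> I y j] \<open>\<phi> ` I = I\<close> by simp
  have F_image: "F ` ?D \<subseteq> S"
    using assms(3) by blast
  from bij D_subset F_invariant orbit_convex F_image \<open>s \<in> S\<close>
  have "\<exists>H. range H \<subseteq> S \<and> (\<forall>x\<in>?D. H x = F x) \<and> (\<forall>x. H (\<phi> x) = H x)"
    by (rule invariant_extension_exists)
  then obtain H where "range H \<subseteq> S" "\<forall>x\<in>?D. H x = F x" "\<forall>x. H (\<phi> x) = H x"
    by blast
  then show ?thesis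
    by (intro exI[of _ H]) auto
qed

end
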